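(* Let $n\ge3$, $\hat r\in\mathbb R^n$, $\delta\ge0$, $p\in[1,\infty]$, and let $q\in[1,\infty]$ be the dual exponent with $1/p+1/q=1$. Then for every $\pi\in\Delta_n$, $$\max_{\|\Delta\|_p\le\delta}\mathrm{Reg}(\pi,\hat r+\Delta)=\max_i\big\{\hat r_i-\langle\pi,\hat r\rangle+\delta\,b_{p,i}(\pi)\big\},\qquad b_{p,i}(\pi):=\|e_i-\pi\|_q.$$ Moreover, the following are equivalent: (a) for every $i$ there is a function $f_i$ with $b_{p,i}(\pi)=f_i(\pi_i)$ for all $\pi\in\Delta_n$; (b) $p\in\{1,\infty\}$. In these endpoint cases, $b_{1,i}(\pi)=1-\pi_i$ and $b_{\infty,i}(\pi)=2(1-\pi_i)$, and consequently $$\max_{\|\Delta\|_\infty\le\delta}\mathrm{Reg}(\pi,\hat r+\Delta)=2\delta+\max_i\{\hat r_i-2\delta\pi_i\}-\langle\pi,\hat r\rangle.$$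
   Context: $\Delta_n:=\{q\in\mathbb R^n_+:\sum_iq_i=1\}$; $e_i$ is the $i$-th standard basis vector. For $\pi\in\Delta_n$ and $s\in\mathbb R^n$, $\mathrm{Reg}(\pi,s):=\max_{\beta\in\Delta_n}\langle\beta-\pi,s\rangle$. *)

theory Defs
  imports "HOL-Analysis.Analysis"
begin

definition prob_simplex :: "(real ^ 'n) set" where
  "prob_simplex = {q. (\<forall>i. 0 \<le> q $ i) \<and> (\<Sum>i\<in>UNIV. q $ i) = 1}"

definition Reg :: "real ^ 'n \<Rightarrow> real ^ 'n \<Rightarrow> real" where
  "Reg \<pi> s = (SUP \<beta>\<in>prob_simplex. (\<beta> - \<pi>) \<bullet> s)"

definition pnorm :: "ereal \<Rightarrow> real ^ 'n \<Rightarrow> real" where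
  "pnorm p x = (if p = \<infinity> then Max (range (\<lambda>i. \<bar>x $ i\<bar>))
     else (\<Sum>i\<in>UNIV. \<bar>x $ i\<bar> powr real_of_ereal p) powr (1 / real_of_ereal p))"

definition dual_exp :: "ereal \<Rightarrow> ereal" where
  "dual_exp p = (if p = 1 then \<infinity> else if p = \<infinity> then 1
     else ereal (real_of_ereal p / (real_of_ereal p - 1)))"

definition bcoef :: "ereal \<Rightarrow> 'n \<Rightarrow> real ^ 'n \<Rightarrow> real" where
  "bcoef p i \<pi> = pnorm (dual_exp p) (axis i 1 - \<pi>)"

end

theory Submission
  imports Defs
begin

text \<open>Since \<open>Reg(\<pi>, s) = max\<^sub>i s\<^sub>i - \<langle>\<pi>, s\<rangle>\<close>, the perturbed regret is
  \<open>max\<^sub>i (r\<^sub>i - \<langle>\<pi>, r\<rangle> + \<langle>e\<^sub>i - \<pi>, \<Delta>\<rangle>)\<close>. The two maxima commute, and by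
  Hoelder's inequality, which is attained, the largest value of \<open>\<langle>e\<^sub>i - \<pi>, \<Delta>\<rangle>\<close> over the
  \<open>p\<close>-ball of radius \<open>\<delta>\<close> is \<open>\<delta> \<parallel>e\<^sub>i - \<pi>\<parallel>\<^sub>q\<close>. On the simplex the vector \<open>e\<^sub>i - \<pi>\<close> has
  largest entry \<open>1 - \<pi>\<^sub>i\<close> in absolute value and absolute entries summing to \<open>2(1 - \<pi>\<^sub>i)\<close>, which
  gives the endpoint cases. For \<open>1 < q < \<infinity>\<close> the points \<open>e\<^sub>j\<close> and \<open>(e\<^sub>j + e\<^sub>k)/2\<close> both have
  \<open>i\<close>-th coordinate \<open>0\<close>, but \<open>\<parallel>e\<^sub>i - \<pi>\<parallel>\<^sub>q\<^sup>q\<close> equals \<open>2\<close> at the first and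
  \<open>1 + 2 (1/2)\<^sup>q < 2\<close> at the second.\<close>

lemma Max_range_mono:
  fixes f g :: "'n::finite \<Rightarrow> 'a::linorder"
  assumes "\<And>i. f i \<le> g i"
  shows "Max (range f) \<le> Max (range g)"
  by (rule Max.boundedI) (auto intro: order_trans[OF assms Max_ge])

lemma Max_range_attained:
  fixes f :: "'n::finite \<Rightarrow> 'a::linorder"
  obtains k where "Max (range f) = f k"
  using Max_in[of "range f"] that by fastforce

lemma obtain_two_distinct_others:
  fixes i :: "'n::finite"
  assumes "CARD('n) \<ge> 3"
  obtains j k where "j \<noteq> i" "k \<noteq> i" "j \<noteq> k"
proof -
  have "card {i, j} < CARD('n)" for j
    using assms by (cases "i = j") auto
  then have "{i, j} \<noteq> UNIV" for j
    by (metis less_irrefl)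
  then obtain j k where "j \<notin> {i}" "k \<notin> {i, j}"
    by (metis insert_absorb2 UNIV_I subsetI subset_antisym)
  with that show ?thesis
    by blast
qed

lemma axis_in_prob_simplex: "axis k 1 \<in> prob_simplex"
  by (simp add: prob_simplex_def axis_def)

lemma prob_simplex_component_le_1:
  assumes "\<pi> \<in> prob_simplex"
  shows "\<pi> $ i \<le> 1" and "i \<noteq> j \<Longrightarrow> \<pi> $ i + \<pi> $ j \<le> 1"
proof -
  have "(\<Sum>l\<in>A. \<pi> $ l) \<le> 1" for A
    using assms sum_mono2[of UNIV A "\<lambda>l. \<pi> $ l"] by (auto simp: prob_simplex_def)
  from this[of "{i}"] this[of "{i, j}"] show "\<pi> $ i \<le> 1" and "i \<noteq> j \<Longrightarrow> \<pi> $ i + \<pi> $ j \<le> 1"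
    by simp_all
qed

lemma Reg_eq: "Reg \<pi> s = Max (range (\<lambda>i. s $ i)) - \<pi> \<bullet> s"
proof -
  obtain k where k: "Max (range (\<lambda>i. s $ i)) = s $ k"
    using Max_range_attained .
  have "(\<beta> - \<pi>) \<bullet> s \<le> s $ k - \<pi> \<bullet> s" if "\<beta> \<in> prob_simplex" for \<beta>
  proof -
    have "\<beta> \<bullet> s = (\<Sum>j\<in>UNIV. \<beta> $ j * s $ j)"
      by (simp add: inner_vec_def)
    also have "\<dots> \<le> (\<Sum>j\<in>UNIV. \<beta> $ j * s $ k)"
      using that Max_ge[of "range (\<lambda>i. s $ i)"] unfolding k
      by (intro sum_mono mult_left_mono) (auto simp: prob_simplex_def)
    also have "\<dots> = s $ k"
      using that by (simp add: prob_simplex_def flip: sum_distrib_right)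
    finally show ?thesis
      by (simp add: inner_diff_left)
  qed
  moreover have "(axis k 1 - \<pi>) \<bullet> s = s $ k - \<pi> \<bullet> s"
    by (simp add: inner_diff_left inner_axis')
  ultimately have "Reg \<pi> s = s $ k - \<pi> \<bullet> s"
    unfolding Reg_def using axis_in_prob_simplex[of k]
    by (intro cSup_eq_maximum) (auto intro!: image_eqI[where x = "axis k 1"])
  with k show ?thesis
    by simp
qed

lemma abs_le_pnorm_infinity: "\<bar>x $ j\<bar> \<le> pnorm \<infinity> x"
  unfolding pnorm_def by simp

lemma pnorm_nonneg: "0 \<le> pnorm p x"
proof (cases "p = \<infinity>")
  case True
  then show ?thesis
    using order_trans[OF abs_ge_zero abs_le_pnorm_infinity] by simp
qed (simp add: pnorm_def)

lemma pnorm_1: "pnorm 1 x = (\<Sum>j\<in>UNIV. \<bar>x $ j\<bar>)"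
  by (simp add: pnorm_def)

lemma pnorm_ereal_powr:
  assumes "0 < P"
  shows "pnorm (ereal P) x powr P = (\<Sum>j\<in>UNIV. \<bar>x $ j\<bar> powr P)"
  using assms by (simp add: pnorm_def powr_powr sum_nonneg)

lemma pnorm_ereal_eq_0D:
  assumes "pnorm (ereal P) x = 0"
  shows "x $ j = 0"
proof -
  have "(\<Sum>j\<in>UNIV. \<bar>x $ j\<bar> powr P) = 0"
    using assms by (simp add: pnorm_def)
  then have "\<bar>x $ j\<bar> powr P = 0"
    by (subst (asm) sum_nonneg_eq_0_iff) auto
  then show ?thesis
    by simp
qed

lemma pnorm_ereal_scaleR:
  assumes "0 < P"
  shows "pnorm (ereal P) (c *\<^sub>R x) = \<bar>c\<bar> * pnorm (ereal P) x"
proof -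
  have "(\<Sum>j\<in>UNIV. \<bar>(c *\<^sub>R x) $ j\<bar> powr P) = \<bar>c\<bar> powr P * (\<Sum>j\<in>UNIV. \<bar>x $ j\<bar> powr P)"
    by (simp add: abs_mult powr_mult sum_distrib_left)
  then show ?thesis
    using assms by (simp add: pnorm_def powr_mult powr_powr sum_nonneg)
qed

lemma Holder_inequality_pnorm:
  fixes a b :: "real ^ 'n"
  assumes P: "P > 1" and Q: "Q > 1" and PQ: "1 / P + 1 / Q = 1"
  shows "(\<Sum>j\<in>UNIV. \<bar>a $ j\<bar> * \<bar>b $ j\<bar>) \<le> pnorm (ereal P) a * pnorm (ereal Q) b"
proof (cases "pnorm (ereal P) a = 0 \<or> pnorm (ereal Q) b = 0")
  case True
  then have "\<bar>a $ j\<bar> * \<bar>b $ j\<bar> = 0" for j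
    using pnorm_ereal_eq_0D by fastforce
  then have "(\<Sum>j\<in>UNIV. \<bar>a $ j\<bar> * \<bar>b $ j\<bar>) = 0"
    by (intro sum.neutral) blast
  then show ?thesis
    using mult_nonneg_nonneg[OF pnorm_nonneg pnorm_nonneg] by simp
next
  case False
  define A where "A = pnorm (ereal P) a"
  define B where "B = pnorm (ereal Q) b"
  have "A > 0" "B > 0"
    using False pnorm_nonneg[of "ereal P" a] pnorm_nonneg[of "ereal Q" b]
    by (auto simp: A_def B_def)
  have A_powr: "A powr P = (\<Sum>j\<in>UNIV. \<bar>a $ j\<bar> powr P)" and B_powr: "B powr Q = (\<Sum>j\<in>UNIV. \<bar>b $ j\<bar> powr Q)"
    using P Q by (simp_all add: A_def B_def pnorm_ereal_powr)
  have "(\<Sum>j\<in>UNIV. \<bar>a $ j\<bar> * \<bar>b $ j\<bar>) / (A * B) = (\<Sum>j\<in>UNIV. (\<bar>a $ j\<bar> / A) * (\<bar>b $ j\<bar> / B))"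
    by (simp add: sum_divide_distrib)
  also have "\<dots> \<le> (\<Sum>j\<in>UNIV. (\<bar>a $ j\<bar> / A) powr P / P + (\<bar>b $ j\<bar> / B) powr Q / Q)"
    using P Q PQ \<open>A > 0\<close> \<open>B > 0\<close> by (intro sum_mono Youngs_inequality) auto
  also have "\<dots> = (\<Sum>j\<in>UNIV. \<bar>a $ j\<bar> powr P) / A powr P / P + (\<Sum>j\<in>UNIV. \<bar>b $ j\<bar> powr Q) / B powr Q / Q"
    by (simp add: powr_divide sum.distrib sum_divide_distrib)
  also have "\<dots> = 1"
    using PQ \<open>A > 0\<close> \<open>B > 0\<close> by (simp flip: A_powr B_powr)
  finally show ?thesis
    using \<open>A > 0\<close> \<open>B > 0\<close> by (simp add: A_def B_def)
qed

lemma Holder_attained_pnorm: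
  fixes v :: "real ^ 'n"
  assumes P: "P > 1" and Q: "Q = P / (P - 1)" and "\<delta> \<ge> 0"
  obtains x where "pnorm (ereal P) x \<le> \<delta>" and "v \<bullet> x = \<delta> * pnorm (ereal Q) v"
proof (cases "pnorm (ereal Q) v = 0")
  case True
  then show ?thesis
    using that[of 0] \<open>\<delta> \<ge> 0\<close> by (simp add: pnorm_def)
next
  case False
  define A where "A = pnorm (ereal Q) v"
  have "A > 0"
    using False pnorm_nonneg[of "ereal Q" v] by (simp add: A_def)
  have "Q > 1" and QP: "(Q - 1) * P = Q"
    using P by (simp_all add: Q field_simps)
  have A_powr: "A powr Q = (\<Sum>j\<in>UNIV. \<bar>v $ j\<bar> powr Q)"
    using \<open>Q > 1\<close> by (simp add: A_def pnorm_ereal_powr)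
  define y where "y = (\<chi> j. sgn (v $ j) * \<bar>v $ j\<bar> powr (Q - 1))"
  have "\<bar>y $ j\<bar> powr P = \<bar>v $ j\<bar> powr Q" for j
    by (cases "v $ j = 0") (simp_all add: y_def abs_mult powr_powr QP)
  then have "pnorm (ereal P) y powr P = A powr Q"
    using P by (simp add: pnorm_ereal_powr A_powr)
  then have "(pnorm (ereal P) y powr P) powr (1 / P) = A powr ((Q - 1) * P / P)"
    by (simp add: powr_powr QP)
  then have y_norm: "pnorm (ereal P) y = A powr (Q - 1)"
    using P pnorm_nonneg[of "ereal P" y] by (simp add: powr_powr)
  have "v $ j * y $ j = \<bar>v $ j\<bar> powr Q" for j
  proof (cases "v $ j = 0")
    case False
    then have "v $ j * y $ j = \<bar>v $ j\<bar> * \<bar>v $ j\<bar> powr (Q - 1)"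
      by (simp add: y_def sgn_if)
    with False show ?thesis
      by (simp add: powr_mult_base)
  qed (use \<open>Q > 1\<close> in \<open>simp add: y_def\<close>)
  then have "v \<bullet> y = (\<Sum>j\<in>UNIV. \<bar>v $ j\<bar> powr Q)"
    by (simp add: inner_vec_def)
  also have "\<dots> = A powr (Q - 1) * A"
    using \<open>A > 0\<close> powr_mult_base[of A "Q - 1"] by (simp add: A_powr mult.commute)
  finally have y_inner: "v \<bullet> y = A powr (Q - 1) * A" .
  define x where "x = (\<delta> / A powr (Q - 1)) *\<^sub>R y"
  show ?thesis
  proof (rule that[of x])
    show "pnorm (ereal P) x \<le> \<delta>"
      using P \<open>\<delta> \<ge> 0\<close> \<open>A > 0\<close> by (simp add: x_def pnorm_ereal_scaleR y_norm)
    show "v \<bullet> x = \<delta> * pnorm (ereal Q) v"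
      using \<open>A > 0\<close> by (simp add: x_def y_inner A_def)
  qed
qed

lemma ereal_ge_1_cases:
  assumes "1 \<le> (p :: ereal)"
  obtains "p = 1" | "p = \<infinity>" | P where "p = ereal P" "P > 1"
proof (cases p)
  case (real P)
  then show ?thesis
    using that assms by (cases "P = 1") (auto simp: one_ereal_def)
qed (use that assms in auto)

lemma dual_exp_ereal: "P > 1 \<Longrightarrow> dual_exp (ereal P) = ereal (P / (P - 1))"
  by (simp add: dual_exp_def one_ereal_def)

lemma inner_le_pnorm_dual_mult_pnorm:
  assumes "1 \<le> p"
  shows "v \<bullet> x \<le> pnorm (dual_exp p) v * pnorm p x"
proof -
  have "v \<bullet> x \<le> (\<Sum>j\<in>UNIV. \<bar>v $ j\<bar> * \<bar>x $ j\<bar>)"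
    unfolding inner_vec_def by (intro sum_mono) (simp flip: abs_mult)
  also from assms have "\<dots> \<le> pnorm (dual_exp p) v * pnorm p x"
  proof (cases rule: ereal_ge_1_cases)
    case 1
    have "(\<Sum>j\<in>UNIV. \<bar>v $ j\<bar> * \<bar>x $ j\<bar>) \<le> (\<Sum>j\<in>UNIV. pnorm \<infinity> v * \<bar>x $ j\<bar>)"
      by (intro sum_mono mult_right_mono abs_le_pnorm_infinity) simp
    with 1 show ?thesis
      by (simp add: dual_exp_def pnorm_1 sum_distrib_left)
  next
    case 2
    have "(\<Sum>j\<in>UNIV. \<bar>v $ j\<bar> * \<bar>x $ j\<bar>) \<le> (\<Sum>j\<in>UNIV. \<bar>v $ j\<bar> * pnorm \<infinity> x)"
      by (intro sum_mono mult_left_mono abs_le_pnorm_infinity) simp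
    with 2 show ?thesis
      by (simp add: dual_exp_def pnorm_1 sum_distrib_right)
  next
    case (3 P)
    then show ?thesis
      using Holder_inequality_pnorm[of "P / (P - 1)" P v x] by (simp add: dual_exp_ereal field_simps)
  qed
  finally show ?thesis .
qed

lemma pnorm_dual_attained:
  assumes "1 \<le> p" and "0 \<le> \<delta>"
  obtains x where "pnorm p x \<le> \<delta>" and "v \<bullet> x = \<delta> * pnorm (dual_exp p) v"
  using assms(1)
proof (cases rule: ereal_ge_1_cases)
  case 1
  obtain k where k: "Max (range (\<lambda>j. \<bar>v $ j\<bar>)) = \<bar>v $ k\<bar>"
    using Max_range_attained .
  define x where "x = axis k (\<delta> * sgn (v $ k))"
  have "pnorm p x = \<bar>\<delta> * sgn (v $ k)\<bar>"
    using 1 by (simp add: pnorm_1 x_def axis_def if_distrib[of abs] cong: if_cong)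
  also have "\<dots> \<le> \<delta>"
    using assms(2) by (auto simp: abs_mult sgn_if)
  finally have "pnorm p x \<le> \<delta>" .
  moreover have "v \<bullet> x = \<delta> * \<bar>v $ k\<bar>"
    by (simp add: x_def inner_axis sgn_if abs_if)
  ultimately show ?thesis
    using that 1 k by (simp add: dual_exp_def pnorm_def)
next
  case 2
  define x where "x = (\<chi> j. \<delta> * sgn (v $ j))"
  have "pnorm p x \<le> \<delta>"
    using 2 assms(2) by (auto simp: pnorm_def x_def abs_mult sgn_if intro!: Max.boundedI)
  moreover have "v \<bullet> x = (\<Sum>j\<in>UNIV. \<delta> * \<bar>v $ j\<bar>)"
    unfolding inner_vec_def by (intro sum.cong) (auto simp: x_def sgn_if abs_if)
  ultimately show ?thesis
    using that 2 by (simp add: dual_exp_def pnorm_1 sum_distrib_left)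
next
  case (3 P)
  obtain x where "pnorm (ereal P) x \<le> \<delta>" and "v \<bullet> x = \<delta> * pnorm (ereal (P / (P - 1))) v"
    using Holder_attained_pnorm[OF \<open>P > 1\<close> refl assms(2)] .
  with that 3 show ?thesis
    by (simp add: dual_exp_ereal)
qed

lemma Reg_add_eq_Max:
  "Reg \<pi> (r + \<Delta>) = Max (range (\<lambda>j. r $ j - \<pi> \<bullet> r + (axis j 1 - \<pi>) \<bullet> \<Delta>))"
proof -
  have "(\<lambda>j. r $ j - \<pi> \<bullet> r + (axis j 1 - \<pi>) \<bullet> \<Delta>) = (\<lambda>j. (r + \<Delta>) $ j + - (\<pi> \<bullet> (r + \<Delta>)))"
    by (simp add: fun_eq_iff inner_diff_left inner_add_right inner_axis')
  then show ?thesis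
    by (simp only: Reg_eq Max_add_commute[OF finite UNIV_not_empty])
qed

lemma Reg_add_le_Max_bcoef:
  assumes "1 \<le> p" and "pnorm p \<Delta> \<le> \<delta>"
  shows "Reg \<pi> (r + \<Delta>) \<le> Max (range (\<lambda>i. r $ i - \<pi> \<bullet> r + \<delta> * bcoef p i \<pi>))"
  unfolding Reg_add_eq_Max
proof (rule Max_range_mono)
  fix j
  have "(axis j 1 - \<pi>) \<bullet> \<Delta> \<le> bcoef p j \<pi> * pnorm p \<Delta>"
    unfolding bcoef_def by (rule inner_le_pnorm_dual_mult_pnorm[OF assms(1)])
  also have "\<dots> \<le> \<delta> * bcoef p j \<pi>"
    using mult_right_mono[OF assms(2) pnorm_nonneg[of "dual_exp p" "axis j 1 - \<pi>"]]
    by (simp add: bcoef_def mult.commute)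
  finally show "r $ j - \<pi> \<bullet> r + (axis j 1 - \<pi>) \<bullet> \<Delta> \<le> r $ j - \<pi> \<bullet> r + \<delta> * bcoef p j \<pi>"
    by simp
qed

lemma Reg_add_attains_Max_bcoef:
  assumes "1 \<le> p" and "0 \<le> \<delta>"
  obtains \<Delta> where "pnorm p \<Delta> \<le> \<delta>"
    and "Reg \<pi> (r + \<Delta>) = Max (range (\<lambda>i. r $ i - \<pi> \<bullet> r + \<delta> * bcoef p i \<pi>))"
proof -
  define g where "g i = r $ i - \<pi> \<bullet> r + \<delta> * bcoef p i \<pi>" for i
  obtain k where k: "Max (range g) = g k"
    using Max_range_attained .
  obtain \<Delta> where \<Delta>: "pnorm p \<Delta> \<le> \<delta>" and "(axis k 1 - \<pi>) \<bullet> \<Delta> = \<delta> * bcoef p k \<pi>"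
    using pnorm_dual_attained[OF assms] unfolding bcoef_def .
  then have "g k = r $ k - \<pi> \<bullet> r + (axis k 1 - \<pi>) \<bullet> \<Delta>"
    by (simp add: g_def)
  also have "\<dots> \<le> Reg \<pi> (r + \<Delta>)"
    unfolding Reg_add_eq_Max by (rule Max_ge) auto
  finally have "g k \<le> Reg \<pi> (r + \<Delta>)" .
  with k Reg_add_le_Max_bcoef[OF assms(1) \<Delta>, of \<pi> r] have "Reg \<pi> (r + \<Delta>) = Max (range g)"
    by (simp add: g_def)
  with \<Delta> that show ?thesis
    by (simp add: g_def)
qed

lemma worst_case_Reg_add:
  assumes "1 \<le> p" and "0 \<le> \<delta>"
  shows "(\<exists>\<Delta>. pnorm p \<Delta> \<le> \<delta> \<and>
            Reg \<pi> (r + \<Delta>) = Max (range (\<lambda>i. r $ i - \<pi> \<bullet> r + \<delta> * bcoef p i \<pi>))) \<and>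
         (\<forall>\<Delta>. pnorm p \<Delta> \<le> \<delta> \<longrightarrow>
            Reg \<pi> (r + \<Delta>) \<le> Max (range (\<lambda>i. r $ i - \<pi> \<bullet> r + \<delta> * bcoef p i \<pi>)))"
proof (intro conjI allI impI)
  obtain \<Delta> where "pnorm p \<Delta> \<le> \<delta>"
    and "Reg \<pi> (r + \<Delta>) = Max (range (\<lambda>i. r $ i - \<pi> \<bullet> r + \<delta> * bcoef p i \<pi>))"
    using Reg_add_attains_Max_bcoef[OF assms] .
  then show "\<exists>\<Delta>. pnorm p \<Delta> \<le> \<delta> \<and>
      Reg \<pi> (r + \<Delta>) = Max (range (\<lambda>i. r $ i - \<pi> \<bullet> r + \<delta> * bcoef p i \<pi>))"
    by blast
qed (rule Reg_add_le_Max_bcoef[OF assms(1)])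

lemma bcoef_1_eq:
  assumes "\<pi> \<in> prob_simplex"
  shows "bcoef 1 i \<pi> = 1 - \<pi> $ i"
proof -
  have "\<bar>(axis i 1 - \<pi>) $ j\<bar> \<le> 1 - \<pi> $ i" for j
    using assms prob_simplex_component_le_1(2)[OF assms, of i j] prob_simplex_component_le_1(1)[OF assms, of i]
    by (cases "j = i") (auto simp: axis_def prob_simplex_def)
  moreover have "\<bar>(axis i 1 - \<pi>) $ i\<bar> = 1 - \<pi> $ i"
    using prob_simplex_component_le_1(1)[OF assms, of i] by simp
  ultimately have "Max (range (\<lambda>j. \<bar>(axis i 1 - \<pi>) $ j\<bar>)) = 1 - \<pi> $ i"
    by (intro Max_eqI) (auto intro!: image_eqI[where x = i] simp del: vector_minus_component)
  then show ?thesis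
    by (simp add: bcoef_def dual_exp_def pnorm_def)
qed

lemma bcoef_infinity_eq:
  assumes "\<pi> \<in> prob_simplex"
  shows "bcoef \<infinity> i \<pi> = 2 * (1 - \<pi> $ i)"
proof -
  have "bcoef \<infinity> i \<pi> = (\<Sum>j\<in>UNIV. \<bar>(axis i 1 - \<pi>) $ j\<bar>)"
    by (simp add: bcoef_def dual_exp_def pnorm_1)
  also have "\<dots> = \<bar>(axis i 1 - \<pi>) $ i\<bar> + (\<Sum>j\<in>UNIV - {i}. \<bar>(axis i 1 - \<pi>) $ j\<bar>)"
    by (rule sum.remove) auto
  also have "(\<Sum>j\<in>UNIV - {i}. \<bar>(axis i 1 - \<pi>) $ j\<bar>) = (\<Sum>j\<in>UNIV - {i}. \<pi> $ j)"
    using assms by (intro sum.cong) (auto simp: axis_def prob_simplex_def)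
  also have "\<dots> = 1 - \<pi> $ i"
    using assms sum.remove[of UNIV i "\<lambda>j. \<pi> $ j"] by (simp add: prob_simplex_def)
  also have "\<bar>(axis i 1 - \<pi>) $ i\<bar> = 1 - \<pi> $ i"
    using prob_simplex_component_le_1(1)[OF assms, of i] by simp
  finally show ?thesis
    by simp
qed

lemma sum_UNIV_three:
  fixes f :: "'n::finite \<Rightarrow> 'a::comm_monoid_add"
  assumes "i \<noteq> j" "i \<noteq> k" "j \<noteq> k" and "\<And>l. l \<notin> {i, j, k} \<Longrightarrow> f l = 0"
  shows "sum f UNIV = f i + f j + f k"
proof -
  have "sum f UNIV = sum f {i, j, k}"
    using assms(4) by (intro sum.mono_neutral_right) auto
  with assms(1-3) show ?thesis
    by (simp add: add.assoc)
qed

lemma bcoef_not_function_of_coordinate: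
  fixes i :: "'n::finite"
  assumes "CARD('n) \<ge> 3" and "P > 1"
  obtains \<pi> \<pi>' :: "real ^ 'n" where "\<pi> \<in> prob_simplex" "\<pi>' \<in> prob_simplex" "\<pi> $ i = \<pi>' $ i"
    "bcoef (ereal P) i \<pi> \<noteq> bcoef (ereal P) i \<pi>'"
proof -
  obtain j k where ij: "j \<noteq> i" and ik: "k \<noteq> i" and jk: "j \<noteq> k"
    using obtain_two_distinct_others[OF assms(1)] .
  define Q where "Q = P / (P - 1)"
  have "Q > 1"
    using assms(2) by (simp add: Q_def)
  have bcoef_powr: "bcoef (ereal P) i \<pi> powr Q = (\<Sum>l\<in>UNIV. \<bar>(axis i 1 - \<pi>) $ l\<bar> powr Q)" for \<pi> :: "real ^ 'n"
    using assms(2) \<open>Q > 1\<close> by (simp add: bcoef_def dual_exp_ereal pnorm_ereal_powr Q_def)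
  define \<pi> :: "real ^ 'n" where "\<pi> = axis j 1"
  define \<pi>' :: "real ^ 'n" where "\<pi>' = (\<chi> l. if l = j \<or> l = k then 1 / 2 else 0)"
  have "\<pi> \<in> prob_simplex"
    unfolding \<pi>_def by (rule axis_in_prob_simplex)
  moreover have "\<pi>' \<in> prob_simplex"
    using sum_UNIV_three[of j k i "\<lambda>l. \<pi>' $ l"] ij ik jk by (auto simp: prob_simplex_def \<pi>'_def)
  moreover have "\<pi> $ i = \<pi>' $ i"
    using ij ik by (simp add: \<pi>_def \<pi>'_def axis_def)
  moreover have "bcoef (ereal P) i \<pi> powr Q = 2"
    unfolding bcoef_powr
    by (subst sum_UNIV_three[OF ij[symmetric] ik[symmetric] jk]) (use ij ik jk \<open>Q > 1\<close> in \<open>auto simp: \<pi>_def axis_def\<close>)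
  moreover have "bcoef (ereal P) i \<pi>' powr Q = 1 + 2 * (1 / 2) powr Q"
    unfolding bcoef_powr
    by (subst sum_UNIV_three[OF ij[symmetric] ik[symmetric] jk]) (use ij ik jk \<open>Q > 1\<close> in \<open>auto simp: \<pi>'_def axis_def\<close>)
  moreover have "(1 / 2 :: real) powr Q < 1 / 2"
    using powr_less_mono'[of "1 / 2" 1 Q] \<open>Q > 1\<close> by simp
  ultimately show ?thesis
    using that by fastforce
qed

lemma Max_bcoef_infinity_eq:
  assumes "\<pi> \<in> prob_simplex"
  shows "Max (range (\<lambda>i. r $ i - \<pi> \<bullet> r + \<delta> * bcoef \<infinity> i \<pi>))
    = 2 * \<delta> + Max (range (\<lambda>i. r $ i - 2 * \<delta> * \<pi> $ i)) - \<pi> \<bullet> r"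
proof -
  have "(\<lambda>i. r $ i - \<pi> \<bullet> r + \<delta> * bcoef \<infinity> i \<pi>) = (\<lambda>i. (r $ i - 2 * \<delta> * \<pi> $ i) + (2 * \<delta> - \<pi> \<bullet> r))"
    by (simp add: fun_eq_iff bcoef_infinity_eq[OF assms] algebra_simps)
  then show ?thesis
    by (simp only: Max_add_commute[OF finite UNIV_not_empty])
qed

lemma worst_case_Reg_add_infinity:
  assumes "\<pi> \<in> prob_simplex" and "0 \<le> \<delta>"
  shows "(\<exists>\<Delta>. pnorm \<infinity> \<Delta> \<le> \<delta> \<and>
            Reg \<pi> (r + \<Delta>) = 2 * \<delta> + Max (range (\<lambda>i. r $ i - 2 * \<delta> * \<pi> $ i)) - \<pi> \<bullet> r) \<and>
         (\<forall>\<Delta>. pnorm \<infinity> \<Delta> \<le> \<delta> \<longrightarrow>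
            Reg \<pi> (r + \<Delta>) \<le> 2 * \<delta> + Max (range (\<lambda>i. r $ i - 2 * \<delta> * \<pi> $ i)) - \<pi> \<bullet> r)"
  using worst_case_Reg_add[of \<infinity> \<delta> \<pi> r] assms(2) unfolding Max_bcoef_infinity_eq[OF assms(1)] by simp

lemma bcoef_function_of_coordinate_iff:
  assumes "CARD('n::finite) \<ge> 3" and "1 \<le> p"
  shows "(\<forall>i::'n. \<exists>f :: real \<Rightarrow> real. \<forall>\<pi>\<in>prob_simplex. bcoef p i \<pi> = f (\<pi> $ i)) \<longleftrightarrow> p \<in> {1, \<infinity>}"
proof
  assume determined: "\<forall>i::'n. \<exists>f :: real \<Rightarrow> real. \<forall>\<pi>\<in>prob_simplex. bcoef p i \<pi> = f (\<pi> $ i)"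
  show "p \<in> {1, \<infinity>}"
  proof (rule ccontr)
    assume "p \<notin> {1, \<infinity>}"
    with assms(2) obtain P where "p = ereal P" and "P > 1"
      by (cases rule: ereal_ge_1_cases) auto
    moreover obtain i :: 'n where True
      by blast
    ultimately obtain \<pi> \<pi>' where "\<pi> \<in> prob_simplex" "\<pi>' \<in> prob_simplex" "\<pi> $ i = \<pi>' $ i"
        "bcoef p i \<pi> \<noteq> bcoef p i \<pi>'"
      using bcoef_not_function_of_coordinate[OF assms(1)] by metis
    moreover obtain f where "\<forall>\<pi>\<in>prob_simplex. bcoef p i \<pi> = f (\<pi> $ i)"
      using determined by blast
    ultimately show False
      by simp
  qed
next
  assume "p \<in> {1, \<infinity>}"
  then consider "p = 1" | "p = \<infinity>"
    by blast
  then show "\<forall>i::'n. \<exists>f :: real \<Rightarrow> real. \<forall>\<pi>\<in>prob_simplex. bcoef p i \<pi> = f (\<pi> $ i)"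
  proof cases
    case 1
    then show ?thesis
      using bcoef_1_eq by (intro allI exI[of _ "\<lambda>t. 1 - t"]) auto
  next
    case 2
    then show ?thesis
      using bcoef_infinity_eq by (intro allI exI[of _ "\<lambda>t. 2 * (1 - t)"]) auto
  qed
qed

theorem mainTheorem10:
  fixes r :: "real ^ 'n" and \<delta> :: real and p :: ereal
  assumes "CARD('n) \<ge> 3" and "\<delta> \<ge> 0" and "1 \<le> p"
  shows "(\<forall>\<pi>\<in>prob_simplex.
            (\<exists>\<Delta>. pnorm p \<Delta> \<le> \<delta> \<and>
               Reg \<pi> (r + \<Delta>) = Max (range (\<lambda>i. r $ i - \<pi> \<bullet> r + \<delta> * bcoef p i \<pi>))) \<and>
            (\<forall>\<Delta>. pnorm p \<Delta> \<le> \<delta> \<longrightarrow>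
               Reg \<pi> (r + \<Delta>) \<le> Max (range (\<lambda>i. r $ i - \<pi> \<bullet> r + \<delta> * bcoef p i \<pi>))))
       \<and> ((\<forall>i::'n. \<exists>f :: real \<Rightarrow> real. \<forall>\<pi>\<in>prob_simplex. bcoef p i \<pi> = f (\<pi> $ i))
            \<longleftrightarrow> p \<in> {1, \<infinity>})
       \<and> (\<forall>\<pi>::real^'n\<in>prob_simplex. \<forall>i. bcoef 1 i \<pi> = 1 - \<pi> $ i \<and> bcoef \<infinity> i \<pi> = 2 * (1 - \<pi> $ i))
       \<and> (\<forall>\<pi>\<in>prob_simplex.
            (\<exists>\<Delta>. pnorm \<infinity> \<Delta> \<le> \<delta> \<and>
               Reg \<pi> (r + \<Delta>) = 2 * \<delta> + Max (range (\<lambda>i. r $ i - 2 * \<delta> * \<pi> $ i)) - \<pi> \<bullet> r) \<and>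
            (\<forall>\<Delta>. pnorm \<infinity> \<Delta> \<le> \<delta> \<longrightarrow>
               Reg \<pi> (r + \<Delta>) \<le> 2 * \<delta> + Max (range (\<lambda>i. r $ i - 2 * \<delta> * \<pi> $ i)) - \<pi> \<bullet> r))"
  by (intro worst_case_Reg_add[OF assms(3,2)] worst_case_Reg_add_infinity[OF _ assms(2)]
      bcoef_function_of_coordinate_iff[OF assms(1,3)] bcoef_1_eq bcoef_infinity_eq conjI ballI allI)

end
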